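(* Let $k\geq 3$ and $\mathbf{x}=(x_1,\ldots,x_n)\in\Delta^{n-1}$, and let $q=q(\mathbf{x})$. If $|\mathbf{x}|_{\max}<1/(k-1)$, then \[ S_k(\mathbf{x})>q^k\binom{1/q}{k}, \] unless the nonzero entries of $\mathbf{x}$ are equal.
   Context: $\Delta^{n-1}=\{\mathbf{x}\in\mathbb{R}^n: x_i\geq0 \text{ for all } i,\ \sum_i x_i=1\}$. $S_k(\mathbf{x})$ denotes the $k$-th elementary symmetric polynomial of $x_1,\ldots,x_n$. $q(\mathbf{x})=x_1^2+\cdots+x_n^2$. $|\mathbf{x}|_{\max}=\max_i x_i$. For real $s$, $\binom{s}{k}=s(s-1)\cdots(s-k+1)/k!$. *)

theory Defs
  imports "HOL-Analysis.Analysis"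
begin

definition in_simplex :: "nat \<Rightarrow> (nat \<Rightarrow> real) \<Rightarrow> bool" where
  "in_simplex n x \<longleftrightarrow> (\<forall>i<n. x i \<ge> 0) \<and> (\<Sum>i<n. x i) = 1"

definition elem_sym :: "nat \<Rightarrow> nat \<Rightarrow> (nat \<Rightarrow> real) \<Rightarrow> real" where
  "elem_sym n k x = (\<Sum>I\<in>{I. I \<subseteq> {..<n} \<and> card I = k}. \<Prod>i\<in>I. x i)"

definition sq_sum :: "nat \<Rightarrow> (nat \<Rightarrow> real) \<Rightarrow> real" where
  "sq_sum n x = (\<Sum>i<n. (x i)^2)"

definition max_entry :: "nat \<Rightarrow> (nat \<Rightarrow> real) \<Rightarrow> real" where
  "max_entry n x = Max (x ` {..<n})"

end

theory Submission
  imports Defs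
begin

(* Write e_j for the elementary symmetric sums of the weights x_i (summing to 1) and q for their
   sum of squares. Weighting the deletion rule e_(j+1) = e_(j+1)(A - i) + x_i e_j(A - i) by x_i and
   summing gives the recurrence
     (j + 2) e_(j+2) = (1 - (j + 1) q) e_(j+1) - D_j / 2,
   where D_j = sum_(i,l) x_i x_l (x_i - x_l) (e_j(A - i) - e_j(A - l))
             = - sum_(i,l) x_i x_l (x_i - x_l)^2 e_(j-1)(A - {i, l}) <= 0,
   and D_1 < 0 as soon as two nonzero weights differ. While (k - 1) q < 1 all factors 1 - t q are
   positive, so iterating gives k! e_k > prod_(t<k) (1 - t q) = k! q^k (1/q choose k) for k >= 3;
   the hypothesis on the largest weight provides (k - 1) q < 1 because q <= max_i x_i. *)

definition elem_sym_on :: "'a set \<Rightarrow> nat \<Rightarrow> ('a \<Rightarrow> real) \<Rightarrow> real" where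
  "elem_sym_on A k x = (\<Sum>I\<in>{I. I \<subseteq> A \<and> card I = k}. \<Prod>i\<in>I. x i)"

lemma elem_sym_on_0: "finite A \<Longrightarrow> elem_sym_on A 0 x = 1"
proof -
  assume "finite A"
  then have "{I. I \<subseteq> A \<and> card I = 0} = {{}}"
    by (auto dest: finite_subset)
  then show ?thesis by (simp add: elem_sym_on_def)
qed

lemma elem_sym_on_insert:
  assumes "finite A" "a \<notin> A"
  shows "elem_sym_on (insert a A) (Suc j) x = elem_sym_on A (Suc j) x + x a * elem_sym_on A j x"
proof -
  let ?S = "\<lambda>j. {I. I \<subseteq> A \<and> card I = j}"
  have split: "{I. I \<subseteq> insert a A \<and> card I = Suc j} = ?S (Suc j) \<union> insert a ` ?S j"
  proof -
    have "card (insert a I) = Suc (card I)" if "I \<subseteq> A" for I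
      using assms that by (meson card_insert_disjoint finite_subset subsetD)
    then have "{insert a I |I. I \<subseteq> A \<and> card (insert a I) = Suc j} = insert a ` ?S j"
      by auto
    then show ?thesis by (simp only: subset_insert_lemma)
  qed
  have inj: "inj_on (insert a) (?S j)"
    using assms(2) by (intro inj_onI) (metis insert_ident mem_Collect_eq subsetD)
  have "elem_sym_on (insert a A) (Suc j) x
      = elem_sym_on A (Suc j) x + (\<Sum>I\<in>?S j. \<Prod>i\<in>insert a I. x i)"
    unfolding elem_sym_on_def split using assms
    by (subst sum.union_disjoint) (auto simp: sum.reindex[OF inj])
  also have "(\<Sum>I\<in>?S j. \<Prod>i\<in>insert a I. x i) = x a * elem_sym_on A j x"
    unfolding elem_sym_on_def sum_distrib_left using assms
    by (intro sum.cong refl) (auto intro: prod.insert dest: finite_subset)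
  finally show ?thesis .
qed

lemma elem_sym_on_1: "finite A \<Longrightarrow> elem_sym_on A (Suc 0) x = sum x A"
proof (induction A rule: finite_induct)
  case empty
  then show ?case by (simp add: elem_sym_on_def)
next
  case (insert a A)
  then show ?case by (simp add: elem_sym_on_insert elem_sym_on_0)
qed

lemma elem_sym_on_remove:
  assumes "finite A" "i \<in> A"
  shows "elem_sym_on A (Suc j) x = elem_sym_on (A - {i}) (Suc j) x + x i * elem_sym_on (A - {i}) j x"
  using elem_sym_on_insert[of "A - {i}" i j x] assms by (simp add: insert_absorb)

lemma elem_sym_on_nonneg: "(\<And>i. i \<in> A \<Longrightarrow> x i \<ge> 0) \<Longrightarrow> elem_sym_on A j x \<ge> 0"
  unfolding elem_sym_on_def by (intro sum_nonneg prod_nonneg) auto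

lemma sum_mult_elem_sym_on_remove:
  "finite A \<Longrightarrow> (\<Sum>i\<in>A. x i * elem_sym_on (A - {i}) j x) = real (Suc j) * elem_sym_on A (Suc j) x"
proof (induction A arbitrary: j rule: finite_induct)
  case empty
  then show ?case by (simp add: elem_sym_on_def)
next
  case (insert a A)
  show ?case
  proof (cases j)
    case 0
    with insert.hyps show ?thesis by (simp add: elem_sym_on_0 elem_sym_on_1)
  next
    case (Suc p)
    have "insert a A - {i} = insert a (A - {i})" if "i \<in> A" for i
      using that insert.hyps by auto
    then have "(\<Sum>i\<in>A. x i * elem_sym_on (insert a A - {i}) j x)
        = (\<Sum>i\<in>A. x i * elem_sym_on (A - {i}) j x) + x a * (\<Sum>i\<in>A. x i * elem_sym_on (A - {i}) p x)"
      using insert.hyps Suc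
      by (simp add: elem_sym_on_insert sum.distrib sum_distrib_left algebra_simps)
    with insert Suc show ?thesis
      by (simp add: elem_sym_on_insert algebra_simps)
  qed
qed

lemma elem_sym_on_remove_diff:
  assumes "finite A" "i \<in> A" "l \<in> A" "i \<noteq> l"
  shows "elem_sym_on (A - {i}) (Suc p) x - elem_sym_on (A - {l}) (Suc p) x
    = (x l - x i) * elem_sym_on (A - {i, l}) p x"
proof -
  have "A - {i} - {l} = A - {i, l}" "A - {l} - {i} = A - {i, l}" by auto
  then show ?thesis
    using elem_sym_on_remove[of "A - {i}" l p x] elem_sym_on_remove[of "A - {l}" i p x] assms
    by (simp add: algebra_simps)
qed


definition elem_sym_defect :: "'a set \<Rightarrow> nat \<Rightarrow> ('a \<Rightarrow> real) \<Rightarrow> real" where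
  "elem_sym_defect A j x = (\<Sum>i\<in>A. \<Sum>l\<in>A. x i * x l * (x i - x l) *
     (elem_sym_on (A - {i}) j x - elem_sym_on (A - {l}) j x))"

lemma elem_sym_defect_Suc:
  assumes "finite A"
  shows "elem_sym_defect A (Suc p) x
    = - (\<Sum>i\<in>A. \<Sum>l\<in>A. x i * x l * (x i - x l)^2 * elem_sym_on (A - {i, l}) p x)"
proof -
  have "x i * x l * (x i - x l) * (elem_sym_on (A - {i}) (Suc p) x - elem_sym_on (A - {l}) (Suc p) x)
      = - (x i * x l * (x i - x l)^2 * elem_sym_on (A - {i, l}) p x)" if "i \<in> A" "l \<in> A" for i l
  proof (cases "i = l")
    case False
    show ?thesis
      unfolding elem_sym_on_remove_diff[OF assms that False] by (simp add: power2_eq_square algebra_simps)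
  qed simp
  then show ?thesis
    unfolding elem_sym_defect_def by (simp add: sum_negf)
qed

lemma elem_sym_defect_nonpos:
  assumes "finite A" "\<And>i. i \<in> A \<Longrightarrow> x i \<ge> 0"
  shows "elem_sym_defect A j x \<le> 0"
proof (cases j)
  case 0
  with assms show ?thesis by (simp add: elem_sym_defect_def elem_sym_on_0)
next
  case (Suc p)
  with assms show ?thesis
    by (auto simp: elem_sym_defect_Suc intro!: sum_nonneg mult_nonneg_nonneg elem_sym_on_nonneg)
qed

lemma elem_sym_defect_1_neg:
  assumes "finite A" "\<And>i. i \<in> A \<Longrightarrow> x i \<ge> 0"
    and "a \<in> A" "b \<in> A" "x a \<noteq> 0" "x b \<noteq> 0" "x a \<noteq> x b"
  shows "elem_sym_defect A (Suc 0) x < 0"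
proof -
  let ?t = "\<lambda>i l. x i * x l * (x i - x l)^2"
  have t_nonneg: "?t i l \<ge> 0" if "i \<in> A" "l \<in> A" for i l
    using assms(2) that by simp
  have "x a > 0" "x b > 0"
    using assms(2)[of a] assms(2)[of b] assms(3-6) by auto
  then have "?t a b > 0"
    using assms(7) by simp
  also have "?t a b \<le> (\<Sum>l\<in>A. ?t a l)"
    using assms t_nonneg by (intro member_le_sum) auto
  also have "\<dots> \<le> (\<Sum>i\<in>A. \<Sum>l\<in>A. ?t i l)"
    using assms t_nonneg by (intro member_le_sum[where f = "\<lambda>i. \<Sum>l\<in>A. ?t i l"] sum_nonneg) auto
  finally show ?thesis
    using assms(1) by (simp add: elem_sym_defect_Suc elem_sym_on_0)
qed


lemma sum_sum_mult_diff_mult_diff: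
  fixes x E :: "'a \<Rightarrow> 'b :: comm_ring_1"
  shows "(\<Sum>i\<in>A. \<Sum>l\<in>A. x i * x l * (x i - x l) * (E i - E l))
    = 2 * (\<Sum>i\<in>A. (x i)^2 * E i) * sum x A - 2 * (\<Sum>i\<in>A. (x i)^2) * (\<Sum>i\<in>A. x i * E i)"
proof -
  have expand: "x i * x l * (x i - x l) * (E i - E l) =
     ((x i)^2 * E i) * x l - (x i)^2 * (x l * E l) - (x i * E i) * (x l)^2 + x i * ((x l)^2 * E l)"
    for i l by (simp add: power2_eq_square algebra_simps)
  have "(\<Sum>i\<in>A. \<Sum>l\<in>A. x i * x l * (x i - x l) * (E i - E l))
    = (\<Sum>i\<in>A. \<Sum>l\<in>A. ((x i)^2 * E i) * x l) - (\<Sum>i\<in>A. \<Sum>l\<in>A. (x i)^2 * (x l * E l))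
      - (\<Sum>i\<in>A. \<Sum>l\<in>A. (x i * E i) * (x l)^2) + (\<Sum>i\<in>A. \<Sum>l\<in>A. x i * ((x l)^2 * E l))"
    by (simp only: expand sum.distrib sum_subtractf)
  also have "\<dots> = (\<Sum>i\<in>A. (x i)^2 * E i) * sum x A - (\<Sum>i\<in>A. (x i)^2) * (\<Sum>i\<in>A. x i * E i)
      - (\<Sum>i\<in>A. x i * E i) * (\<Sum>i\<in>A. (x i)^2) + sum x A * (\<Sum>i\<in>A. (x i)^2 * E i)"
    by (simp only: sum_product)
  finally show ?thesis by (simp add: algebra_simps)
qed

lemma elem_sym_on_Suc_Suc:
  assumes "finite A" "sum x A = 1"
  shows "real (Suc (Suc j)) * elem_sym_on A (Suc (Suc j)) x
    = (1 - real (Suc j) * (\<Sum>i\<in>A. (x i)^2)) * elem_sym_on A (Suc j) x - elem_sym_defect A j x / 2"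
proof -
  let ?e = "\<lambda>j. elem_sym_on A j x" and ?E = "\<lambda>i. elem_sym_on (A - {i}) j x"
  let ?q = "\<Sum>i\<in>A. (x i)^2"
  have defect: "elem_sym_defect A j x = 2 * (\<Sum>i\<in>A. (x i)^2 * ?E i) - 2 * ?q * (\<Sum>i\<in>A. x i * ?E i)"
    unfolding elem_sym_defect_def sum_sum_mult_diff_mult_diff assms(2) by simp
  have "real (Suc (Suc j)) * ?e (Suc (Suc j)) = (\<Sum>i\<in>A. x i * elem_sym_on (A - {i}) (Suc j) x)"
    using sum_mult_elem_sym_on_remove[OF assms(1)] by simp
  also have "\<dots> = (\<Sum>i\<in>A. x i * ?e (Suc j) - (x i)^2 * ?E i)"
    using elem_sym_on_remove[OF assms(1)]
    by (intro sum.cong refl) (simp add: power2_eq_square algebra_simps)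
  also have "\<dots> = ?e (Suc j) - (\<Sum>i\<in>A. (x i)^2 * ?E i)"
    using assms(2) by (simp add: sum_subtractf flip: sum_distrib_right)
  also have "\<dots> = ?e (Suc j) - ?q * (\<Sum>i\<in>A. x i * ?E i) - elem_sym_defect A j x / 2"
    unfolding defect by (simp add: field_simps)
  also have "\<dots> = (1 - real (Suc j) * ?q) * ?e (Suc j) - elem_sym_defect A j x / 2"
    using sum_mult_elem_sym_on_remove[OF assms(1)] by (simp add: algebra_simps)
  finally show ?thesis .
qed


context
  fixes A :: "'a set" and x :: "'a \<Rightarrow> real"
  assumes finite: "finite A" and nonneg: "\<And>i. i \<in> A \<Longrightarrow> x i \<ge> 0" and sum_1: "sum x A = 1"
begin

lemma elem_sym_on_Suc_ge:
  "(1 - real m * (\<Sum>i\<in>A. (x i)^2)) * elem_sym_on A m x \<le> real (Suc m) * elem_sym_on A (Suc m) x"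
proof (cases m)
  case 0
  then show ?thesis using finite sum_1 by (simp add: elem_sym_on_0 elem_sym_on_1)
next
  case (Suc j)
  then show ?thesis
    using elem_sym_on_Suc_Suc[OF finite sum_1, where j = j] elem_sym_defect_nonpos[OF finite nonneg, where j = j]
    by simp
qed

lemma elem_sym_on_3_gt:
  assumes "a \<in> A" "b \<in> A" "x a \<noteq> 0" "x b \<noteq> 0" "x a \<noteq> x b"
  shows "(1 - 2 * (\<Sum>i\<in>A. (x i)^2)) * elem_sym_on A 2 x < 3 * elem_sym_on A 3 x"
  using elem_sym_on_Suc_Suc[OF finite sum_1, where j = 1] elem_sym_defect_1_neg[OF finite nonneg assms]
  by (simp add: numeral_eq_Suc)

lemma prod_le_fact_mult_elem_sym_on:
  assumes "(real k - 1) * (\<Sum>i\<in>A. (x i)^2) \<le> 1"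
  shows "(\<Prod>t<k. 1 - real t * (\<Sum>i\<in>A. (x i)^2)) \<le> fact k * elem_sym_on A k x"
  using assms
proof (induction k)
  case 0
  then show ?case using finite by (simp add: elem_sym_on_0)
next
  case (Suc k)
  let ?q = "\<Sum>i\<in>A. (x i)^2"
  have "(real k - 1) * ?q \<le> real k * ?q"
    by (simp add: mult_right_mono sum_nonneg)
  then have IH: "(\<Prod>t<k. 1 - real t * ?q) \<le> fact k * elem_sym_on A k x"
    using Suc by simp
  have "(\<Prod>t<Suc k. 1 - real t * ?q) = (1 - real k * ?q) * (\<Prod>t<k. 1 - real t * ?q)"
    by simp
  also have "\<dots> \<le> fact k * ((1 - real k * ?q) * elem_sym_on A k x)"
    using mult_left_mono[OF IH, of "1 - real k * ?q"] Suc.prems by (simp add: algebra_simps)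
  also have "\<dots> \<le> fact k * (real (Suc k) * elem_sym_on A (Suc k) x)"
    by (intro mult_left_mono elem_sym_on_Suc_ge) simp
  also have "\<dots> = fact (Suc k) * elem_sym_on A (Suc k) x"
    by simp
  finally show ?case .
qed

lemma prod_less_fact_mult_elem_sym_on:
  assumes "a \<in> A" "b \<in> A" "x a \<noteq> 0" "x b \<noteq> 0" "x a \<noteq> x b"
    and "3 \<le> k" "(real k - 1) * (\<Sum>i\<in>A. (x i)^2) < 1"
  shows "(\<Prod>t<k. 1 - real t * (\<Sum>i\<in>A. (x i)^2)) < fact k * elem_sym_on A k x"
  using assms(6,7)
proof (induction k rule: nat_induct_at_least)
  let ?q = "\<Sum>i\<in>A. (x i)^2"
  case base
  have "(\<Prod>t<3. 1 - real t * ?q) = (1 - 2 * ?q) * (\<Prod>t<2. 1 - real t * ?q)"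
    by (simp add: numeral_eq_Suc)
  also have "\<dots> \<le> (1 - 2 * ?q) * (fact 2 * elem_sym_on A 2 x)"
    using base prod_le_fact_mult_elem_sym_on[of 2]
    by (intro mult_left_mono) (auto simp: sum_nonneg)
  also have "\<dots> < 2 * (3 * elem_sym_on A 3 x)"
    using elem_sym_on_3_gt[OF assms(1-5)] by (simp add: algebra_simps)
  finally show ?case by (simp add: numeral_eq_Suc)
next
  let ?q = "\<Sum>i\<in>A. (x i)^2"
  case (Suc k)
  have "(real k - 1) * ?q \<le> real k * ?q"
    by (simp add: mult_right_mono sum_nonneg)
  then have IH: "(\<Prod>t<k. 1 - real t * ?q) < fact k * elem_sym_on A k x"
    using Suc by simp
  have "(\<Prod>t<Suc k. 1 - real t * ?q) = (1 - real k * ?q) * (\<Prod>t<k. 1 - real t * ?q)"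
    by simp
  also have "\<dots> < fact k * ((1 - real k * ?q) * elem_sym_on A k x)"
    using mult_strict_left_mono[OF IH, of "1 - real k * ?q"] Suc.prems by (simp add: algebra_simps)
  also have "\<dots> \<le> fact k * (real (Suc k) * elem_sym_on A (Suc k) x)"
    by (intro mult_left_mono elem_sym_on_Suc_ge) simp
  also have "\<dots> = fact (Suc k) * elem_sym_on A (Suc k) x"
    by simp
  finally show ?case .
qed

end

lemma power_mult_gbinomial_inverse:
  fixes q :: real
  assumes "q \<noteq> 0"
  shows "q ^ k * ((1 / q) gchoose k) = (\<Prod>t<k. 1 - real t * q) / fact k"
proof -
  have "q ^ k * (\<Prod>t<k. 1 / q - of_nat t) = (\<Prod>t<k. q * (1 / q - of_nat t))"
    by (simp add: prod.distrib)
  also have "\<dots> = (\<Prod>t<k. 1 - real t * q)"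
    using assms by (intro prod.cong refl) (simp add: field_simps)
  finally show ?thesis
    by (simp add: gbinomial_prod_rev atLeast0LessThan)
qed


lemma sq_sum_le_max_entry:
  assumes "in_simplex n x"
  shows "sq_sum n x \<le> max_entry n x"
proof -
  have "x i \<le> max_entry n x" if "i < n" for i
    unfolding max_entry_def using that by (intro Max_ge) auto
  then have "sq_sum n x \<le> (\<Sum>i<n. x i * max_entry n x)"
    using assms unfolding sq_sum_def power2_eq_square in_simplex_def
    by (intro sum_mono mult_left_mono) auto
  also have "\<dots> = max_entry n x"
    using assms by (simp add: in_simplex_def flip: sum_distrib_right)
  finally show ?thesis .
qed

theorem theorem3:
  fixes n k :: nat and x :: "nat \<Rightarrow> real"
  assumes "k \<ge> 3"
    and "in_simplex n x"
    and "max_entry n x < 1 / (real k - 1)"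
    and "\<not> (\<forall>i<n. \<forall>j<n. x i \<noteq> 0 \<longrightarrow> x j \<noteq> 0 \<longrightarrow> x i = x j)"
  shows "elem_sym n k x > (sq_sum n x) ^ k * ((1 / sq_sum n x) gchoose k)"
proof -
  let ?q = "sq_sum n x"
  have simplex: "finite {..<n}" "\<And>i. i \<in> {..<n} \<Longrightarrow> x i \<ge> 0" "sum x {..<n} = 1"
    using assms(2) by (auto simp: in_simplex_def)
  obtain a b where ab: "a \<in> {..<n}" "b \<in> {..<n}" "x a \<noteq> 0" "x b \<noteq> 0" "x a \<noteq> x b"
    using assms(4) by auto
  have "0 < (x a)^2"
    using ab(3) by simp
  also have "\<dots> \<le> ?q"
    unfolding sq_sum_def using ab(1) by (intro member_le_sum) auto
  finally have "?q > 0" .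
  moreover have "?q < 1 / (real k - 1)"
    using sq_sum_le_max_entry[OF assms(2)] assms(3) by simp
  ultimately have "(real k - 1) * ?q < 1"
    using assms(1) by (simp add: field_simps)
  then have "(\<Prod>t<k. 1 - real t * ?q) < fact k * elem_sym_on {..<n} k x"
    using prod_less_fact_mult_elem_sym_on[OF simplex ab assms(1)] by (simp add: sq_sum_def)
  then show ?thesis
    using power_mult_gbinomial_inverse[of ?q k] \<open>?q > 0\<close>
    by (simp add: elem_sym_def elem_sym_on_def divide_less_eq mult.commute)
qed

end
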